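(* Let $G$ be a bipartite graph and let $M$ be a maximum matching in $G$. Then $\alpha(G-M)\le \mathrm{diss}(G)\le \frac{4}{3}\alpha(G-M)$.
   Context: All graphs are finite, simple and undirected. A set $I$ of vertices of a graph $G$ is a dissociation set if the induced subgraph $G[I]$ has maximum degree at most $1$; $\mathrm{diss}(G)$ is the maximum order of a dissociation set in $G$. $\alpha(H)$ denotes the independence number of $H$. For a set $M$ of edges, $G-M$ is the graph on $V(G)$ with edge set $E(G)\setminus M$. *)

theory Defs
  imports Complex_Main
begin

definition graph :: "'a set \<Rightarrow> 'a set set \<Rightarrow> bool" where
  "graph V E \<longleftrightarrow> finite V \<and> (\<forall>e\<in>E. e \<subseteq> V \<and> card e = 2)"

definition bipartite :: "'a set \<Rightarrow> 'a set set \<Rightarrow> bool" where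
  "bipartite V E \<longleftrightarrow> (\<exists>A B. A \<union> B = V \<and> A \<inter> B = {} \<and>
      (\<forall>e\<in>E. card (e \<inter> A) = 1 \<and> card (e \<inter> B) = 1))"

definition matching :: "'a set set \<Rightarrow> 'a set set \<Rightarrow> bool" where
  "matching E M \<longleftrightarrow> M \<subseteq> E \<and> (\<forall>e\<in>M. \<forall>f\<in>M. e \<noteq> f \<longrightarrow> e \<inter> f = {})"

definition maximum_matching :: "'a set set \<Rightarrow> 'a set set \<Rightarrow> bool" where
  "maximum_matching E M \<longleftrightarrow> matching E M \<and> (\<forall>M'. matching E M' \<longrightarrow> card M' \<le> card M)"

definition induced_degree :: "'a set set \<Rightarrow> 'a set \<Rightarrow> 'a \<Rightarrow> nat" where
  "induced_degree E S v = card {u\<in>S. {u, v} \<in> E}"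

definition independent_set :: "'a set \<Rightarrow> 'a set set \<Rightarrow> 'a set \<Rightarrow> bool" where
  "independent_set V E I \<longleftrightarrow> I \<subseteq> V \<and> (\<forall>e\<in>E. \<not> e \<subseteq> I)"

definition dissociation_set :: "'a set \<Rightarrow> 'a set set \<Rightarrow> 'a set \<Rightarrow> bool" where
  "dissociation_set V E I \<longleftrightarrow> I \<subseteq> V \<and> (\<forall>v\<in>I. induced_degree E I v \<le> 1)"

definition alpha :: "'a set \<Rightarrow> 'a set set \<Rightarrow> nat" where
  "alpha V E = Max (card ` {I. independent_set V E I})"

definition diss :: "'a set \<Rightarrow> 'a set set \<Rightarrow> nat" where
  "diss V E = Max (card ` {I. dissociation_set V E I})"

end

theory Submission
  imports Defs
begin

text \<open>
  An independent set of \<open>G - M\<close> is a dissociation set of \<open>G\<close>: the only edges of \<open>G\<close> it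
  induces belong to the matching \<open>M\<close>. Conversely, let \<open>D\<close> be a dissociation set and \<open>N\<close> a
  maximum matching of \<open>G - M\<close>. The edges of \<open>M \<union> N\<close> inside \<open>D\<close> are pairwise disjoint, so there
  are at most \<open>|D|/2\<close> of them, while each of \<open>M\<close>, \<open>N\<close> has at most \<open>|V - D|\<close> edges leaving
  \<open>D\<close>. With \<open>|N| \<le> |M|\<close> this gives \<open>3|D| + 4|N| \<le> 4|V|\<close>, and by Koenig's theorem \<open>G - M\<close>
  has an independent set of size \<open>|V| - |N|\<close>. Koenig's theorem is derived from the deficiency
  form of Hall's theorem.
\<close>

lemma finite_edges: "graph V E \<Longrightarrow> finite E"
  unfolding graph_def by (metis Pow_iff finite_Pow_iff finite_subset subsetI)

lemma graph_subset: "graph V E \<Longrightarrow> F \<subseteq> E \<Longrightarrow> graph V F"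
  by (auto simp: graph_def)

lemma bipartite_subset: "bipartite V E \<Longrightarrow> F \<subseteq> E \<Longrightarrow> bipartite V F"
  unfolding bipartite_def by blast

lemma edge_other_end:
  assumes "graph V E" and "e \<in> E" and "v \<in> e"
  obtains u where "e = {u, v}"
proof -
  have "card e = 2" using assms(1,2) by (auto simp: graph_def)
  then obtain x y where "e = {x, y}" by (auto simp: card_2_iff)
  with assms(3) have "e = {y, v} \<or> e = {x, v}" by auto
  with that show ?thesis by blast
qed

lemma matching_common_vertex:
  "matching E M \<Longrightarrow> e \<in> M \<Longrightarrow> f \<in> M \<Longrightarrow> v \<in> e \<Longrightarrow> v \<in> f \<Longrightarrow> e = f"
  unfolding matching_def by blast

definition vertex_cover :: "'a set \<Rightarrow> 'a set set \<Rightarrow> 'a set \<Rightarrow> bool" where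
  "vertex_cover V E C \<longleftrightarrow> C \<subseteq> V \<and> (\<forall>e\<in>E. e \<inter> C \<noteq> {})"

lemma bipartite_edge:
  assumes "graph V E" and "A \<union> B = V" and "\<forall>e\<in>E. card (e \<inter> A) = 1 \<and> card (e \<inter> B) = 1"
    and "e \<in> E"
  obtains a b where "e = {a, b}" "a \<in> A" "b \<in> B"
proof -
  obtain a b where "e \<inter> A = {a}" "e \<inter> B = {b}"
    using assms(3,4) by (metis One_nat_def card_1_singleton_iff)
  moreover have "e = (e \<inter> A) \<union> (e \<inter> B)" using assms(1,2,4) by (auto simp: graph_def)
  ultimately show ?thesis using that by blast
qed

lemma inj_on_if_disjoint_images:
  assumes "inj_on f T" and "inj_on g (A - T)" and "f ` T \<subseteq> X" and "g ` (A - T) \<inter> X = {}"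
  shows "inj_on (\<lambda>x. if x \<in> T then f x else g x) A"
proof (rule inj_onI)
  fix x y assume "x \<in> A" "y \<in> A" "(if x \<in> T then f x else g x) = (if y \<in> T then f y else g y)"
  then show "x = y"
    using inj_onD[OF assms(1), of x y] inj_onD[OF assms(2), of x y] assms(3,4)
    by (cases "x \<in> T"; cases "y \<in> T") auto
qed

lemma Hall_condition_finite:
  assumes "\<forall>T\<subseteq>A. card T \<le> card (\<Union>(G ` T))" and "a \<in> A"
  shows "finite (G a)"
proof -
  have "card {a} \<le> card (\<Union>(G ` {a}))" using assms by blast
  then show ?thesis by (simp add: card_ge_0_finite)
qed

lemma Hall_condition_Diff_tight:
  assumes hall: "\<forall>U\<subseteq>A. card U \<le> card (\<Union>(G ` U))" and "finite A"
    and T: "T \<subseteq> A" "card (\<Union>(G ` T)) \<le> card T"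
  shows "\<forall>U\<subseteq>A - T. card U \<le> card (\<Union>((\<lambda>x. G x - \<Union>(G ` T)) ` U))"
proof (intro allI impI)
  fix U assume U: "U \<subseteq> A - T"
  have fin: "finite (\<Union>(G ` S))" if "S \<subseteq> A" for S
    using that \<open>finite A\<close> Hall_condition_finite[OF hall] by (auto intro: finite_subset)
  have "card U + card T = card (U \<union> T)"
    using U T \<open>finite A\<close> by (subst card_Un_disjoint) (auto intro: finite_subset)
  also have "\<dots> \<le> card (\<Union>(G ` (U \<union> T)))" using hall U T by (metis Diff_subset Un_subset_iff order_trans)
  also have "\<Union>(G ` (U \<union> T)) = \<Union>((\<lambda>x. G x - \<Union>(G ` T)) ` U) \<union> \<Union>(G ` T)" by blast
  also have "card \<dots> = card (\<Union>((\<lambda>x. G x - \<Union>(G ` T)) ` U)) + card (\<Union>(G ` T))"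
    using fin[of U] fin[of T] U T by (intro card_Un_disjoint) (auto intro: finite_subset)
  finally show "card U \<le> card (\<Union>((\<lambda>x. G x - \<Union>(G ` T)) ` U))" using T(2) by linarith
qed

lemma Hall_condition_Diff_point:
  assumes surplus: "\<And>T. T \<noteq> {} \<Longrightarrow> T \<subset> A \<Longrightarrow> card T < card (\<Union>(G ` T))" and "a \<in> A"
  shows "\<forall>T\<subseteq>A - {a}. card T \<le> card (\<Union>((\<lambda>x. G x - {b}) ` T))"
proof (intro allI impI)
  fix T assume T: "T \<subseteq> A - {a}"
  show "card T \<le> card (\<Union>((\<lambda>x. G x - {b}) ` T))"
  proof (cases "T = {}")
    case False
    with T \<open>a \<in> A\<close> have "card T < card (\<Union>(G ` T))" by (intro surplus) auto
    also have "\<dots> \<le> card (\<Union>(G ` T) - {b}) + 1"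
      using diff_card_le_card_Diff[of "{b}" "\<Union>(G ` T)"] by simp
    also have "\<Union>(G ` T) - {b} = \<Union>((\<lambda>x. G x - {b}) ` T)" by blast
    finally show ?thesis by simp
  qed simp
qed

theorem Hall_marriage:
  assumes "finite A" and "\<forall>T\<subseteq>A. card T \<le> card (\<Union>(G ` T))"
  shows "\<exists>f. inj_on f A \<and> (\<forall>a\<in>A. f a \<in> G a)"
  using assms
proof (induction "card A" arbitrary: A G rule: less_induct)
  case less
  note hall = less.prems(2)
  show ?case
  proof (cases "\<exists>T. T \<noteq> {} \<and> T \<subset> A \<and> card (\<Union>(G ` T)) \<le> card T")
    case True
    then obtain T where T: "T \<noteq> {}" "T \<subset> A" "card (\<Union>(G ` T)) \<le> card T" by blast
    have "finite T" using T(2) less.prems(1) finite_subset by blast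
    have "card T < card A" using T(2) less.prems(1) psubset_card_mono by blast
    then obtain f1 where f1: "inj_on f1 T" "\<forall>a\<in>T. f1 a \<in> G a"
      using less.hyps[of T G] \<open>finite T\<close> hall T(2) by auto
    define G' where "G' x = G x - \<Union>(G ` T)" for x
    have "card (A - T) < card A"
      using T less.prems(1) by (intro psubset_card_mono) auto
    moreover have "\<forall>U\<subseteq>A - T. card U \<le> card (\<Union>(G' ` U))"
      unfolding G'_def using Hall_condition_Diff_tight[OF hall less.prems(1)] T by auto
    ultimately obtain f2 where f2: "inj_on f2 (A - T)" "\<forall>a\<in>A - T. f2 a \<in> G' a"
      using less.hyps[of "A - T" G'] less.prems(1) by auto
    define f where "f x = (if x \<in> T then f1 x else f2 x)" for x
    have "inj_on f A"
      unfolding f_def using f1 f2 by (intro inj_on_if_disjoint_images[where X = "\<Union>(G ` T)"]) (auto simp: G'_def)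
    moreover have "\<forall>a\<in>A. f a \<in> G a" using f1(2) f2(2) by (auto simp: f_def G'_def)
    ultimately show ?thesis by auto
  next
    case False
    then have surplus: "\<And>T. T \<noteq> {} \<Longrightarrow> T \<subset> A \<Longrightarrow> card T < card (\<Union>(G ` T))"
      by (meson not_le)
    show ?thesis
    proof (cases "A = {}")
      case False
      then obtain a where a: "a \<in> A" by blast
      have "card {a} \<le> card (\<Union>(G ` {a}))" using hall a by blast
      then obtain b where b: "b \<in> G a" by fastforce
      have "card (A - {a}) < card A" using a less.prems(1) by (meson card_Diff1_less)
      then obtain f' where f': "inj_on f' (A - {a})" "\<forall>x\<in>A - {a}. f' x \<in> G x - {b}"
        using less.hyps[of "A - {a}" "\<lambda>x. G x - {b}"] less.prems(1)
          Hall_condition_Diff_point[OF surplus a] by auto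
      have "inj_on (f'(a := b)) (insert a (A - {a}))"
        using f' by (auto simp: inj_on_def)
      then have "inj_on (f'(a := b)) A" using a by (simp add: insert_absorb)
      moreover have "\<forall>x\<in>A. (f'(a := b)) x \<in> G x" using f'(2) b by auto
      ultimately show ?thesis by blast
    qed simp
  qed
qed

text \<open>Adding \<open>d\<close> new vertices adjacent to all of \<open>A\<close> restores Hall's condition; the vertices
  of \<open>A\<close> not assigned a new vertex form \<open>A'\<close>.\<close>
lemma Hall_deficiency:
  fixes G :: "'a \<Rightarrow> 'b set"
  assumes "finite A" and fin: "\<forall>a\<in>A. finite (G a)"
    and hall: "\<forall>T\<subseteq>A. card T \<le> card (\<Union>(G ` T)) + d"
  shows "\<exists>A' f. A' \<subseteq> A \<and> card A \<le> card A' + d \<and> inj_on f A' \<and> (\<forall>a\<in>A'. f a \<in> G a)"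
proof -
  define G' :: "_ \<Rightarrow> ('b + nat) set" where "G' a = Inl ` G a \<union> Inr ` {..<d}" for a
  have "card T \<le> card (\<Union>(G' ` T))" if T: "T \<subseteq> A" for T
  proof (cases "T = {}")
    case False
    then have "\<Union>(G' ` T) = Inl ` (\<Union>(G ` T)) \<union> Inr ` {..<d}" by (auto simp: G'_def)
    moreover have "finite (\<Union>(G ` T))" using T fin \<open>finite A\<close> by (auto intro: finite_subset)
    moreover have "card (Inl ` (\<Union>(G ` T)) \<union> Inr ` {..<d} :: ('b + nat) set)
        = card (Inl ` (\<Union>(G ` T)) :: ('b + nat) set) + card (Inr ` {..<d} :: ('b + nat) set)"
      by (rule card_Un_disjoint) (use calculation in auto)
    ultimately have "card (\<Union>(G' ` T)) = card (\<Union>(G ` T)) + d"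
      by (simp add: card_image)
    then show ?thesis using hall T by simp
  qed simp
  then obtain f where f: "inj_on f A" "\<forall>a\<in>A. f a \<in> G' a"
    using Hall_marriage[OF \<open>finite A\<close>] by blast
  define A' where "A' = {a\<in>A. isl (f a)}"
  have "A' \<subseteq> A" by (auto simp: A'_def)
  have "f ` (A - A') \<subseteq> Inr ` {..<d}" using f(2) by (auto simp: A'_def G'_def)
  then have "card (f ` (A - A')) \<le> card (Inr ` {..<d} :: ('b + nat) set)" by (intro card_mono) auto
  moreover have "card (f ` (A - A')) = card (A - A')"
    using f(1) by (intro card_image) (auto intro: inj_on_subset)
  moreover have "card (A - A') = card A - card A'"
    using \<open>A' \<subseteq> A\<close> \<open>finite A\<close> by (intro card_Diff_subset) (auto intro: finite_subset)
  ultimately have "card A \<le> card A' + d" by (simp add: card_image)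
  moreover have "inj_on (projl \<circ> f) A'" using f(1) by (auto simp: A'_def inj_on_def isl_def)
  moreover have "\<forall>a\<in>A'. (projl \<circ> f) a \<in> G a" using f(2) by (auto simp: A'_def G'_def)
  ultimately show ?thesis using \<open>A' \<subseteq> A\<close> by blast
qed

lemma matching_of_inj_on:
  assumes "A \<inter> B = {}" and "A' \<subseteq> A" and "inj_on g A'" and "\<forall>a\<in>A'. g a \<in> B \<and> {a, g a} \<in> E"
  shows "matching E ((\<lambda>a. {a, g a}) ` A') \<and> card ((\<lambda>a. {a, g a}) ` A') = card A'"
proof
  have g_B: "a \<notin> g ` A'" if "a \<in> A'" for a using that assms(1,2,4) by auto
  show "matching E ((\<lambda>a. {a, g a}) ` A')"
    unfolding matching_def using assms(4) g_B inj_onD[OF assms(3)] by fastforce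
  show "card ((\<lambda>a. {a, g a}) ` A') = card A'"
    using g_B by (intro card_image inj_onI) (metis doubleton_eq_iff imageI)
qed

lemma vertex_cover_bipartite:
  assumes "graph V E" and "A \<union> B = V" and "\<forall>e\<in>E. card (e \<inter> A) = 1 \<and> card (e \<inter> B) = 1"
  shows "vertex_cover V E ((A - S) \<union> \<Union>((\<lambda>a. {b\<in>B. {a, b} \<in> E}) ` S))"
  unfolding vertex_cover_def
proof (intro conjI ballI)
  show "(A - S) \<union> \<Union>((\<lambda>a. {b\<in>B. {a, b} \<in> E}) ` S) \<subseteq> V" using assms(2) by blast
  fix e assume "e \<in> E"
  then obtain a b where "e = {a, b}" "a \<in> A" "b \<in> B" using bipartite_edge[OF assms] by blast
  with \<open>e \<in> E\<close> show "e \<inter> ((A - S) \<union> \<Union>((\<lambda>a. {b\<in>B. {a, b} \<in> E}) ` S)) \<noteq> {}"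
    by (cases "a \<in> S") auto
qed

text \<open>
  For a set \<open>S\<close> of maximum deficiency \<open>d = |S| - |\<Gamma>(S)|\<close> the cover \<open>(A - S) \<union> \<Gamma>(S)\<close> has
  \<open>|A| - d\<close> vertices, and the deficiency form of Hall's theorem matches \<open>|A| - d\<close> vertices.
\<close>
theorem Koenig_vertex_cover:
  assumes "graph V E" and "bipartite V E"
  shows "\<exists>N C. matching E N \<and> vertex_cover V E C \<and> card C \<le> card N"
proof -
  obtain A B where AB: "A \<union> B = V" "A \<inter> B = {}"
    and split: "\<forall>e\<in>E. card (e \<inter> A) = 1 \<and> card (e \<inter> B) = 1"
    using assms(2) by (auto simp: bipartite_def)
  have "finite A" "finite B" using AB assms(1) by (auto simp: graph_def)
  define \<Gamma> where "\<Gamma> a = {b\<in>B. {a, b} \<in> E}" for a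
  have fin_\<Gamma>: "finite (\<Union>(\<Gamma> ` S))" for S
    using \<open>finite B\<close> by (rule finite_subset[rotated]) (auto simp: \<Gamma>_def)
  define \<delta> where "\<delta> S = int (card S) - int (card (\<Union>(\<Gamma> ` S)))" for S
  obtain S where S: "S \<subseteq> A" "Max (\<delta> ` Pow A) = \<delta> S"
    using obtains_MAX[of "Pow A" \<delta>] \<open>finite A\<close> by auto
  have \<delta>_max: "\<delta> T \<le> \<delta> S" if "T \<subseteq> A" for T
    using that S(2) \<open>finite A\<close> by (metis Max_ge PowI finite_Pow_iff finite_imageI imageI)
  define d where "d = nat (\<delta> S)"
  have "card T \<le> card (\<Union>(\<Gamma> ` T)) + d" if "T \<subseteq> A" for T
  proof -
    have "\<delta> S \<le> int d" by (simp add: d_def)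
    then have "int (card T) \<le> int (card (\<Union>(\<Gamma> ` T))) + int d"
      using \<delta>_max[OF that] unfolding \<delta>_def by linarith
    then show ?thesis by linarith
  qed
  then obtain A' g where A': "A' \<subseteq> A" "card A \<le> card A' + d" "inj_on g A'" "\<forall>a\<in>A'. g a \<in> \<Gamma> a"
    using Hall_deficiency[of A \<Gamma> d] \<open>finite A\<close> fin_\<Gamma>[of "{_}"] by auto
  define N where "N = (\<lambda>a. {a, g a}) ` A'"
  have N: "matching E N" "card N = card A'"
    using matching_of_inj_on[OF AB(2) A'(1,3), of E] A'(4) by (auto simp: N_def \<Gamma>_def)
  define C where "C = (A - S) \<union> \<Union>(\<Gamma> ` S)"
  have "vertex_cover V E C"
    unfolding C_def \<Gamma>_def by (rule vertex_cover_bipartite[OF assms(1) AB(1) split])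
  moreover have "card C \<le> card A - card S + card (\<Union>(\<Gamma> ` S))"
    using card_Un_le[of "A - S"] card_Diff_subset[of S A] S(1) \<open>finite A\<close>
    unfolding C_def by (metis finite_subset)
  moreover have "card S \<le> card A" using S(1) \<open>finite A\<close> by (rule card_mono[rotated])
  moreover have "\<delta> S \<ge> 0" using \<delta>_max[of "{}"] by (simp add: \<delta>_def)
  ultimately show ?thesis using N A'(2) by (intro exI[of _ N] exI[of _ C]) (auto simp: d_def \<delta>_def)
qed

lemma Koenig_independent_set:
  assumes "graph V E" and "bipartite V E"
  obtains N I where "matching E N" "independent_set V E I" "card V \<le> card I + card N"
proof -
  obtain N C where N: "matching E N" and C: "vertex_cover V E C" "card C \<le> card N"
    using Koenig_vertex_cover[OF assms] by blast
  have "C \<subseteq> V" "finite V" using C(1) assms(1) by (simp_all add: vertex_cover_def graph_def)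
  then have "card V = card (V - C) + card C"
    using card_Diff_subset[of C V] card_mono[of V C] finite_subset[of C V] by simp
  with C(2) have "card V \<le> card (V - C) + card N" by linarith
  moreover have "independent_set V E (V - C)"
    using C(1) by (auto simp: vertex_cover_def independent_set_def)
  ultimately show ?thesis using that N by blast
qed

lemma dissociation_set_neighbour_unique:
  assumes "graph V E" and "dissociation_set V E D" and "v \<in> D"
    and "u \<in> D" "{u, v} \<in> E" and "w \<in> D" "{w, v} \<in> E"
  shows "u = w"
proof -
  have "finite D" using assms(1,2) by (auto simp: graph_def dissociation_set_def intro: finite_subset)
  moreover have "card {z\<in>D. {z, v} \<in> E} \<le> Suc 0"
    using assms(2,3) by (simp add: dissociation_set_def induced_degree_def)
  ultimately have "\<forall>a\<in>{z\<in>D. {z, v} \<in> E}. \<forall>b\<in>{z\<in>D. {z, v} \<in> E}. a = b"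
    by (simp add: card_le_Suc0_iff_eq)
  then show ?thesis using assms(4-7) by blast
qed

lemma dissociation_set_edges_disjoint:
  assumes "graph V E" and "dissociation_set V E D"
    and "e \<in> E" "e \<subseteq> D" and "f \<in> E" "f \<subseteq> D" and "e \<noteq> f"
  shows "e \<inter> f = {}"
proof (rule ccontr)
  assume "e \<inter> f \<noteq> {}"
  then obtain v where "v \<in> e" "v \<in> f" by blast
  moreover obtain u w where "e = {u, v}" "f = {w, v}"
    using edge_other_end[OF assms(1,3) \<open>v \<in> e\<close>] edge_other_end[OF assms(1,5) \<open>v \<in> f\<close>] by metis
  ultimately have "u = w"
    using dissociation_set_neighbour_unique[OF assms(1,2)] assms(3-6) by blast
  with \<open>e = {u, v}\<close> \<open>f = {w, v}\<close> assms(7) show False by simp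
qed

lemma card_edges_inside_dissociation_set:
  assumes "graph V E" and "dissociation_set V E D" and "F \<subseteq> E" and "\<forall>e\<in>F. e \<subseteq> D"
  shows "2 * card F \<le> card D"
proof -
  have card_e: "card e = 2" if "e \<in> F" for e using that assms(1,3) by (auto simp: graph_def)
  have "pairwise disjnt F"
    unfolding pairwise_def disjnt_def
    using dissociation_set_edges_disjoint[OF assms(1,2)] assms(3,4) by blast
  then have "card (\<Union>F) = 2 * card F"
    using card_e by (subst card_Union_disjoint) (auto intro: card_ge_0_finite)
  moreover have "finite D" using assms(1,2) by (auto simp: graph_def dissociation_set_def intro: finite_subset)
  ultimately show ?thesis using assms(4) by (metis Sup_least card_mono)
qed

lemma card_matching_edges_leaving:
  assumes "graph V E" and "matching E M"
  shows "card {e\<in>M. \<not> e \<subseteq> D} \<le> card (V - D)"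
proof -
  define h where "h e = (SOME x. x \<in> e - D)" for e
  have h: "h e \<in> e - D" if "\<not> e \<subseteq> D" for e
  proof -
    from that have "\<exists>x. x \<in> e - D" by blast
    then show ?thesis unfolding h_def by (rule someI_ex)
  qed
  have "inj_on h {e\<in>M. \<not> e \<subseteq> D}"
  proof (rule inj_onI)
    fix e f assume e: "e \<in> {e\<in>M. \<not> e \<subseteq> D}" and f: "f \<in> {e\<in>M. \<not> e \<subseteq> D}" and "h e = h f"
    then show "e = f"
      using h[of e] h[of f] matching_common_vertex[OF assms(2), of e f "h e"] by simp
  qed
  moreover have "e \<subseteq> V" if "e \<in> M" for e
    using that assms by (auto simp: matching_def graph_def)
  then have "h ` {e\<in>M. \<not> e \<subseteq> D} \<subseteq> V - D" using h by blast
  moreover have "finite (V - D)" using assms(1) by (simp add: graph_def)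
  ultimately show ?thesis by (rule card_inj_on_le)
qed

lemma two_matchings_dissociation_set_bound:
  assumes "graph V E" and "dissociation_set V E D"
    and "matching E M" and "matching E N" and "M \<inter> N = {}"
  shows "2 * card M + 2 * card N + 3 * card D \<le> 4 * card V"
proof -
  have "finite M" "finite N"
    using assms(3,4) finite_edges[OF assms(1)] by (auto simp: matching_def intro: finite_subset)
  define F where "F = {e \<in> M \<union> N. e \<subseteq> D}"
  have "2 * card F \<le> card D"
    using assms(3,4) by (intro card_edges_inside_dissociation_set[OF assms(1,2)]) (auto simp: F_def matching_def)
  have "card M + card N = card (M \<union> N)"
    using \<open>finite M\<close> \<open>finite N\<close> assms(5) by (simp add: card_Un_disjoint)
  also have "M \<union> N = F \<union> ({e\<in>M. \<not> e \<subseteq> D} \<union> {e\<in>N. \<not> e \<subseteq> D})" by (auto simp: F_def)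
  also have "card \<dots> \<le> card F + (card {e\<in>M. \<not> e \<subseteq> D} + card {e\<in>N. \<not> e \<subseteq> D})"
    by (meson add_left_mono card_Un_le order_trans)
  also have "\<dots> \<le> card F + 2 * card (V - D)"
    using card_matching_edges_leaving[OF assms(1,3), of D] card_matching_edges_leaving[OF assms(1,4), of D]
    by linarith
  finally have "card M + card N \<le> card F + 2 * card (V - D)" .
  moreover have "card (V - D) + card D = card V"
    using assms(1,2) unfolding graph_def dissociation_set_def
    by (metis card_Diff_subset card_mono finite_subset le_add_diff_inverse2)
  ultimately show ?thesis using \<open>2 * card F \<le> card D\<close> by linarith
qed

lemma dissociation_set_if_independent_Diff_matching:
  assumes "graph V E" and "matching E M" and "independent_set V (E - M) I"
  shows "dissociation_set V E I"
  unfolding dissociation_set_def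
proof (intro conjI ballI)
  show "I \<subseteq> V" using assms(3) by (simp add: independent_set_def)
  fix v assume "v \<in> I"
  have in_M: "e \<in> M" if "e \<in> E" "e \<subseteq> I" for e
    using assms(3) that by (auto simp: independent_set_def)
  have "u = w" if "u \<in> I" "{u, v} \<in> E" "w \<in> I" "{w, v} \<in> E" for u w
  proof -
    have "{u, v} \<in> M" "{w, v} \<in> M"
      using in_M that \<open>v \<in> I\<close> by simp_all
    then show "u = w" by (metis doubleton_eq_iff insertCI matching_common_vertex[OF assms(2)])
  qed
  moreover have "finite I" using assms unfolding graph_def independent_set_def by (blast intro: finite_subset)
  ultimately have "card {u\<in>I. {u, v} \<in> E} \<le> Suc 0" by (subst card_le_Suc0_iff_eq) auto
  then show "induced_degree E I v \<le> 1" by (simp add: induced_degree_def)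
qed

lemma finite_independent_sets: "finite V \<Longrightarrow> finite {I. independent_set V E I}"
  by (rule finite_subset[of _ "Pow V"]) (auto simp: independent_set_def)

lemma finite_dissociation_sets: "finite V \<Longrightarrow> finite {D. dissociation_set V E D}"
  by (rule finite_subset[of _ "Pow V"]) (auto simp: dissociation_set_def)

lemma card_le_alpha: "finite V \<Longrightarrow> independent_set V E I \<Longrightarrow> card I \<le> alpha V E"
  unfolding alpha_def by (rule Max_ge) (simp_all add: finite_independent_sets)

lemma card_le_diss: "finite V \<Longrightarrow> dissociation_set V E D \<Longrightarrow> card D \<le> diss V E"
  unfolding diss_def by (rule Max_ge) (simp_all add: finite_dissociation_sets)

lemma alpha_attained:
  assumes "finite V" and "\<forall>e\<in>E. e \<noteq> {}"
  obtains I where "independent_set V E I" "card I = alpha V E"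
proof -
  have "independent_set V E {}" using assms(2) by (auto simp: independent_set_def)
  then have "alpha V E \<in> card ` {I. independent_set V E I}"
    unfolding alpha_def using finite_independent_sets[OF assms(1)] by (intro Max_in) auto
  with that show ?thesis by auto
qed

lemma diss_attained:
  assumes "finite V"
  obtains D where "dissociation_set V E D" "card D = diss V E"
proof -
  have "dissociation_set V E {}" by (simp add: dissociation_set_def)
  then have "diss V E \<in> card ` {D. dissociation_set V E D}"
    unfolding diss_def using finite_dissociation_sets[OF assms] by (intro Max_in) auto
  with that show ?thesis by auto
qed

lemma alpha_Diff_matching_le_diss:
  assumes "graph V E" and "matching E M"
  shows "alpha V (E - M) \<le> diss V E"
proof -
  have "finite V" "\<forall>e\<in>E - M. e \<noteq> {}" using assms(1) by (auto simp: graph_def)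
  then obtain I where I: "independent_set V (E - M) I" "card I = alpha V (E - M)"
    by (rule alpha_attained)
  have "dissociation_set V E I" by (rule dissociation_set_if_independent_Diff_matching[OF assms I(1)])
  then show ?thesis using card_le_diss[OF \<open>finite V\<close>] I(2) by metis
qed

theorem mainTheorem2:
  fixes V :: "'a set" and E M :: "'a set set"
  assumes "graph V E"
    and "bipartite V E"
    and "maximum_matching E M"
  shows "alpha V (E - M) \<le> diss V E
       \<and> real (diss V E) \<le> 4 / 3 * real (alpha V (E - M))"
proof
  have M: "matching E M" and M_max: "\<And>N. matching E N \<Longrightarrow> card N \<le> card M"
    using assms(3) by (auto simp: maximum_matching_def)
  show "alpha V (E - M) \<le> diss V E" by (rule alpha_Diff_matching_le_diss[OF assms(1) M])
  have "finite V" using assms(1) by (simp add: graph_def)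
  obtain N I where N: "matching (E - M) N" and I: "independent_set V (E - M) I" "card V \<le> card I + card N"
    using Koenig_independent_set[OF graph_subset[OF assms(1)] bipartite_subset[OF assms(2)], of "E - M"]
    by blast
  have "matching E N" "M \<inter> N = {}" using N by (auto simp: matching_def)
  obtain D where D: "dissociation_set V E D" "card D = diss V E"
    using diss_attained[OF \<open>finite V\<close>] .
  have "3 * card D + 4 * card N \<le> 4 * card V"
    using two_matchings_dissociation_set_bound[OF assms(1) D(1) M \<open>matching E N\<close> \<open>M \<inter> N = {}\<close>]
      M_max[OF \<open>matching E N\<close>] by linarith
  moreover have "card I \<le> alpha V (E - M)" using card_le_alpha[OF \<open>finite V\<close> I(1)] .
  ultimately have "3 * diss V E \<le> 4 * alpha V (E - M)" using I(2) D(2) by linarith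
  then show "real (diss V E) \<le> 4 / 3 * real (alpha V (E - M))" by linarith
qed

end
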